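(* For every integer $m\ge1$ and every $x\in I$, $$\sum_{i=0}^m\Big|x-\frac{i}{m}\Big|\,\big|b_{i-1,m-1}(x)-b_{i,m-1}(x)\big|=\frac1m.$$
   Context: $I=[0,1]$. $b_{i,m}(t)=\binom{m}{i}t^i(1-t)^{m-i}$ for $i\in\{0,\ldots,m\}$, with the convention $b_{-1,m-1}=b_{m,m-1}=0$. *)

theory Defs
  imports Complex_Main
begin

definition bern :: "int \<Rightarrow> nat \<Rightarrow> real \<Rightarrow> real" where
  "bern i m t = (if 0 \<le> i \<and> i \<le> int m
     then real (m choose nat i) * t ^ nat i * (1 - t) ^ (m - nat i) else 0)"

end

theory Submission
  imports Defs "HOL-Analysis.Weierstrass_Theorems"
begin

(* Write B_{m,i} for the Bernstein polynomials of the library (Bernstein m i) and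
   D_i = b_{i-1,m-1} - b_{i,m-1} for the differences in the theorem, m = n + 1.
   The proof rests on the derivative-type identity

       D_i(x) * x(1-x) = (i/m - x) * B_{m,i}(x)          (0 <= i <= m),

   which turns every summand, multiplied by x(1-x) >= 0, into (x - i/m)^2 B_{m,i}(x).
   Summing and using the variance of the binomial distribution,
   sum_i (x - i/m)^2 B_{m,i}(x) = x(1-x)/m, shows that the sum S(x) of the theorem
   satisfies S(x) * x(1-x) = x(1-x)/m on [0,1]; for 0 < x < 1 we cancel x(1-x).
   At the endpoints x = 0 and x = 1 the Bernstein basis reduces to unit vectors,
   and S(x) = 1/m is checked directly. *)

lemma bern_eq_Bernstein: "bern (int k) n x = Bernstein n k x"
  by (simp add: bern_def Bernstein_def)

lemma bern_at_0: "bern i n 0 = (if i = 0 then 1 else 0)"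
  by (simp add: bern_def)

lemma bern_at_1: "bern i n 1 = (if i = int n then 1 else 0)"
  by (auto simp: bern_def)

text \<open>The key identity for consecutive basis polynomials, with index shift:
  it is the algebraic content of the formula for the derivative of a Bernstein
  polynomial.\<close>
lemma Bernstein_difference:
  fixes x :: real
  assumes "j \<le> n"
  shows "(Bernstein n j x - Bernstein n (Suc j) x) * (x * (1 - x))
         = (real (Suc j) / real (Suc n) - x) * Bernstein (Suc n) (Suc j) x"
proof -
  define C where "C = real (Suc n choose Suc j)"
  define P where "P = x ^ j * (1 - x) ^ (n - j)"
  have pascal: "real (n choose j) + real (n choose Suc j) = C"
    by (simp add: C_def)
  have absorb: "real (n choose j) = C * real (Suc j) / real (Suc n)"
    using Suc_times_binomial_eq[of n j] unfolding C_def
    by (simp add: field_simps flip: of_nat_mult)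
  have lower: "Bernstein n j x = real (n choose j) * P"
    by (simp add: Bernstein_def P_def)
  have upper: "Bernstein n (Suc j) x * (1 - x) = real (n choose Suc j) * x * P"
  proof (cases "j = n")
    case False
    with assms have "n - j = Suc (n - Suc j)" by simp
    then show ?thesis by (simp add: Bernstein_def P_def)
  qed (simp add: Bernstein_def)
  have shifted: "Bernstein (Suc n) (Suc j) x = C * x * P"
    by (simp add: Bernstein_def C_def P_def)
  have "(Bernstein n j x - Bernstein n (Suc j) x) * (x * (1 - x))
        = Bernstein n j x * (x * (1 - x)) - x * (Bernstein n (Suc j) x * (1 - x))"
    by (simp add: algebra_simps)
  also have "\<dots> = x * P * (real (n choose j) - x * (real (n choose j) + real (n choose Suc j)))"
    unfolding lower upper by (simp add: algebra_simps)
  also have "\<dots> = (real (Suc j) / real (Suc n) - x) * Bernstein (Suc n) (Suc j) x"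
    unfolding pascal unfolding absorb shifted by (simp add: algebra_simps)
  finally show ?thesis .
qed

lemma bern_difference:
  fixes x :: real
  assumes "i \<le> Suc n"
  shows "(bern (int i - 1) n x - bern (int i) n x) * (x * (1 - x))
         = (real i / real (Suc n) - x) * Bernstein (Suc n) i x"
proof (cases i)
  case 0
  then show ?thesis by (simp add: bern_def Bernstein_def algebra_simps)
next
  case (Suc j)
  with assms have "j \<le> n" by simp
  moreover have "int i - 1 = int j" using Suc by simp
  ultimately show ?thesis
    using Suc Bernstein_difference[of j n x] by (simp only: bern_eq_Bernstein)
qed

lemma Bernstein_variance:
  fixes x :: real
  assumes "n > 0"
  shows "(\<Sum>k\<le>n. (x - real k / real n)\<^sup>2 * Bernstein n k x) = x * (1 - x) / real n"
proof -
  have expand: "(x - real k / real n)\<^sup>2 * B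
      = (real k * (real k - 1) * B + (1 - 2 * real n * x) * (real k * B) + (real n * x)\<^sup>2 * B)
        / (real n)\<^sup>2"
    for k B
    using assms by (simp add: field_simps power2_eq_square)
  have "(\<Sum>k\<le>n. (x - real k / real n)\<^sup>2 * Bernstein n k x)
      = ((\<Sum>k\<le>n. real k * (real k - 1) * Bernstein n k x)
         + (1 - 2 * real n * x) * (\<Sum>k\<le>n. real k * Bernstein n k x)
         + (real n * x)\<^sup>2 * (\<Sum>k\<le>n. Bernstein n k x)) / (real n)\<^sup>2"
    by (simp only: expand sum.distrib sum_distrib_left flip: sum_divide_distrib)
  also have "\<dots> = x * (1 - x) / real n"
    unfolding sum_kk_Bernstein sum_k_Bernstein sum_Bernstein
    using assms by (simp add: field_simps power2_eq_square)
  finally show ?thesis .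
qed

definition weighted_difference_sum :: "nat \<Rightarrow> real \<Rightarrow> real" where
  "weighted_difference_sum m x = (\<Sum>i=0..m. \<bar>x - real i / real m\<bar> *
      \<bar>bern (int i - 1) (m - 1) x - bern (int i) (m - 1) x\<bar>)"

lemma weighted_difference_sum_times_weight:
  fixes x :: real
  assumes "0 \<le> x" "x \<le> 1"
  shows "weighted_difference_sum (Suc n) x * (x * (1 - x)) = x * (1 - x) / real (Suc n)"
proof -
  have summand: "\<bar>x - real i / real (Suc n)\<bar> * \<bar>bern (int i - 1) n x - bern (int i) n x\<bar>
                   * (x * (1 - x))
                 = (x - real i / real (Suc n))\<^sup>2 * Bernstein (Suc n) i x"
    if "i \<le> Suc n" for i
  proof -
    have "\<bar>bern (int i - 1) n x - bern (int i) n x\<bar> * (x * (1 - x))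
          = \<bar>(bern (int i - 1) n x - bern (int i) n x) * (x * (1 - x))\<bar>"
      using assms by (simp add: abs_mult)
    also have "\<dots> = \<bar>(real i / real (Suc n) - x) * Bernstein (Suc n) i x\<bar>"
      by (simp only: bern_difference[OF that])
    also have "\<dots> = \<bar>x - real i / real (Suc n)\<bar> * Bernstein (Suc n) i x"
      using assms by (simp add: abs_mult abs_minus_commute Bernstein_nonneg)
    finally have "\<bar>x - real i / real (Suc n)\<bar> *
        (\<bar>bern (int i - 1) n x - bern (int i) n x\<bar> * (x * (1 - x)))
        = (\<bar>x - real i / real (Suc n)\<bar> * \<bar>x - real i / real (Suc n)\<bar>)
          * Bernstein (Suc n) i x"
      by (simp only: mult.assoc)
    then show ?thesis by (simp only: abs_mult_self_eq power2_eq_square mult.assoc)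
  qed
  have "weighted_difference_sum (Suc n) x * (x * (1 - x))
        = (\<Sum>i\<le>Suc n. (x - real i / real (Suc n))\<^sup>2 * Bernstein (Suc n) i x)"
    unfolding weighted_difference_sum_def sum_distrib_right atMost_atLeast0 diff_Suc_1
    by (rule sum.cong[OF refl], rule summand) simp
  also have "\<dots> = x * (1 - x) / real (Suc n)"
    by (rule Bernstein_variance) simp
  finally show ?thesis .
qed

lemma weighted_difference_sum_at_0: "weighted_difference_sum (Suc n) 0 = 1 / real (Suc n)"
proof -
  have "weighted_difference_sum (Suc n) 0 = (\<Sum>i=0..Suc n. if i = 1 then 1 / real (Suc n) else 0)"
    unfolding weighted_difference_sum_def by (rule sum.cong) (auto simp: bern_at_0)
  then show ?thesis by simp
qed

lemma weighted_difference_sum_at_1: "weighted_difference_sum (Suc n) 1 = 1 / real (Suc n)"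
proof -
  have "weighted_difference_sum (Suc n) 1 = (\<Sum>i=0..Suc n. if i = n then 1 / real (Suc n) else 0)"
    unfolding weighted_difference_sum_def by (rule sum.cong) (auto simp: bern_at_1 field_simps)
  then show ?thesis by simp
qed

theorem mainTheorem6:
  fixes m :: nat and x :: real
  assumes "m \<ge> 1" and "x \<in> {0..1}"
  shows "(\<Sum>i=0..m. \<bar>x - real i / real m\<bar> *
            \<bar>bern (int i - 1) (m - 1) x - bern (int i) (m - 1) x\<bar>) = 1 / real m"
proof -
  obtain n where m: "m = Suc n" using assms(1) by (cases m) auto
  consider "x = 0" | "x = 1" | "0 < x" "x < 1" using assms(2) by force
  then have "weighted_difference_sum (Suc n) x = 1 / real (Suc n)"
  proof cases
    case 3
    then have "x * (1 - x) \<noteq> 0" by simp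
    moreover have "weighted_difference_sum (Suc n) x * (x * (1 - x))
                   = 1 / real (Suc n) * (x * (1 - x))"
      using weighted_difference_sum_times_weight[of x n] 3 by simp
    ultimately show ?thesis by (rule mult_right_cancel[THEN iffD1])
  qed (simp_all add: weighted_difference_sum_at_0 weighted_difference_sum_at_1)
  then show ?thesis by (simp add: m weighted_difference_sum_def)
qed

end
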